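(* The matrix $L_n$ satisfies $L_n\ge0$ entrywise and $L_n^\top\varphi_n<\varphi_n$ entrywise; consequently its spectral radius is $<1$, $\mathrm I_n-L_n$ is a nonsingular $M$-matrix and $(\mathrm I_n-L_n)^{-1}\ge0$ entrywise. Set $u_n=(\mathrm I_n-L_n)^{-1}V_n$, $v_n=(\mathrm I_n-L_n)^{-1}U_n$ and $\vartheta_n^\star=-\frac{\mathbf 1_n^\top v_n}{\mathbf 1_n^\top u_n}$ (with $\mathbf 1_n^\top u_n\neq0$). Then the unique maximiser $(\bar z_n^Q,\bar z_n^S)$ of $g$ on $\mathfrak F_n$ is given by $$\bar z_n^S=u_n\vartheta_n^\star+v_n,\qquad \bar z_n^{Q,i,j}=p_{i,j}\Big(n\bar\mu_{j,n}+\frac1{c_i}\mathbf 1_{\{i=j\}}-\frac{\gamma_i\sigma}{\sqrt n}\bar z_n^{S,i}\rho_j\nu_j\Big),$$ where $\bar\mu_{j,n}=\frac{1}{n\Theta_{j,n}}\Big(1-\zeta_j-\frac{\sigma}{\sqrt n}a_j\bar z_n^{S,j}\Big)$.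
   Context: Fix $n\ge1$, $\sigma>0$, and for each $i$: $c_i>0$, $\gamma_i>0$, $\nu_i>0$, $\rho_i\in(-1,1)$; $\rho=(\rho_i)$. Variables $z^Q=(z^{Q,i,j})\in\mathbb{R}^{n\times n}$ ($i$ row, $j$ column), $z^S\in\mathbb{R}^n$. Define $$g(z^Q,z^S)=-\frac1n\sum_{i=1}^n\Big(\frac{(z^{Q,i,i})^2}{2c_i}+\frac{\gamma_i}{2}\sum_{j=1}^n\nu_j^2(z^{Q,i,j})^2+\frac{\gamma_i\sigma^2}{2}(z^{S,i})^2+\frac{\gamma_i\sigma}{\sqrt n}z^{S,i}\sum_{j=1}^n\rho_j\nu_jz^{Q,i,j}\Big)+\frac1n\sum_{i=1}^n\frac{z^{Q,i,i}}{c_i},$$ and $\mathfrak F_n=\{(z^Q,z^S):\sum_{i=1}^nz^{Q,i,j}=1\ \forall j,\ \sum_{k=1}^nz^{S,k}=0\}$. Define $p_{i,j}=\frac{1}{\gamma_i\nu_j^2}$ for $j\ne i$ and $p_{i,i}=\frac{1}{\gamma_i\nu_i^2+1/c_i}$; for each $j$: $\Theta_{j,n}=\sum_{i=1}^np_{i,j}$, $\zeta_j=p_{j,j}/c_j\in(0,1)$, $a_j=\rho_j\zeta_j/\nu_j$, $w_{j,n}=\frac{1}{n\Theta_{j,n}}$; for each $k$: $M_{k,j}=\rho_j\nu_jp_{k,j}$, $\upsilon_{k,n}=\sum_{j=1}^n\rho_j^2\nu_j^2p_{k,j}$, $\varphi_{k,n}=1-\frac{\gamma_k}{n}\upsilon_{k,n}$,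 $\varphi_n=(\varphi_{k,n})_k$. Define the $n\times n$ matrix $L_n$ by $(L_n)_{k,j}=\frac{1}{\varphi_{k,n}}w_{j,n}a_jM_{k,j}=\frac{\rho_j^2\zeta_jp_{k,j}}{n\varphi_{k,n}\Theta_{j,n}}$, and vectors $V_n,U_n\in\mathbb{R}^n$ by $(V_n)_k=\frac{n}{\gamma_k\sigma^2\varphi_{k,n}}$ and $(U_n)_k=-\frac{1}{\varphi_{k,n}}(C_{k,n}+r_{k,n})$, where $C_{k,n}=\frac{1}{\sigma\sqrt n}\sum_{j=1}^n\frac{1-\zeta_j}{\Theta_{j,n}}M_{k,j}$ and $r_{k,n}=\frac{1}{\sigma\sqrt n}\frac{\rho_k\nu_k}{c_k}p_{k,k}$. *)

theory Defs
  imports "Jordan_Normal_Form.Spectral_Radius"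
begin

(* Indices 1..n of the paper are rendered as 0..n-1. Model parameters
   c, gam (gamma), nu, rho are functions nat => real; only values at
   indices < n matter. *)

definition pp :: "(nat \<Rightarrow> real) \<Rightarrow> (nat \<Rightarrow> real) \<Rightarrow> (nat \<Rightarrow> real) \<Rightarrow> nat \<Rightarrow> nat \<Rightarrow> real" where
  "pp c gam nu i j = (if j \<noteq> i then 1 / (gam i * (nu j)^2) else 1 / (gam i * (nu i)^2 + 1 / c i))"

definition Theta :: "(nat \<Rightarrow> real) \<Rightarrow> (nat \<Rightarrow> real) \<Rightarrow> (nat \<Rightarrow> real) \<Rightarrow> nat \<Rightarrow> nat \<Rightarrow> real" where
  "Theta c gam nu n j = (\<Sum>i<n. pp c gam nu i j)"

definition zeta :: "(nat \<Rightarrow> real) \<Rightarrow> (nat \<Rightarrow> real) \<Rightarrow> (nat \<Rightarrow> real) \<Rightarrow> nat \<Rightarrow> real" where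
  "zeta c gam nu j = pp c gam nu j j / c j"

definition aa :: "(nat \<Rightarrow> real) \<Rightarrow> (nat \<Rightarrow> real) \<Rightarrow> (nat \<Rightarrow> real) \<Rightarrow> (nat \<Rightarrow> real) \<Rightarrow> nat \<Rightarrow> real" where
  "aa c gam nu rho j = rho j * zeta c gam nu j / nu j"

definition ww :: "(nat \<Rightarrow> real) \<Rightarrow> (nat \<Rightarrow> real) \<Rightarrow> (nat \<Rightarrow> real) \<Rightarrow> nat \<Rightarrow> nat \<Rightarrow> real" where
  "ww c gam nu n j = 1 / (real n * Theta c gam nu n j)"

definition MM :: "(nat \<Rightarrow> real) \<Rightarrow> (nat \<Rightarrow> real) \<Rightarrow> (nat \<Rightarrow> real) \<Rightarrow> (nat \<Rightarrow> real) \<Rightarrow> nat \<Rightarrow> nat \<Rightarrow> real" where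
  "MM c gam nu rho k j = rho j * nu j * pp c gam nu k j"

definition upsilon :: "(nat \<Rightarrow> real) \<Rightarrow> (nat \<Rightarrow> real) \<Rightarrow> (nat \<Rightarrow> real) \<Rightarrow> (nat \<Rightarrow> real) \<Rightarrow> nat \<Rightarrow> nat \<Rightarrow> real" where
  "upsilon c gam nu rho n k = (\<Sum>j<n. (rho j)^2 * (nu j)^2 * pp c gam nu k j)"

definition phi :: "(nat \<Rightarrow> real) \<Rightarrow> (nat \<Rightarrow> real) \<Rightarrow> (nat \<Rightarrow> real) \<Rightarrow> (nat \<Rightarrow> real) \<Rightarrow> nat \<Rightarrow> nat \<Rightarrow> real" where
  "phi c gam nu rho n k = 1 - gam k / real n * upsilon c gam nu rho n k"

definition phi_vec :: "(nat \<Rightarrow> real) \<Rightarrow> (nat \<Rightarrow> real) \<Rightarrow> (nat \<Rightarrow> real) \<Rightarrow> (nat \<Rightarrow> real) \<Rightarrow> nat \<Rightarrow> real vec" where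
  "phi_vec c gam nu rho n = vec n (\<lambda>k. phi c gam nu rho n k)"

definition Lmat :: "(nat \<Rightarrow> real) \<Rightarrow> (nat \<Rightarrow> real) \<Rightarrow> (nat \<Rightarrow> real) \<Rightarrow> (nat \<Rightarrow> real) \<Rightarrow> nat \<Rightarrow> real mat" where
  "Lmat c gam nu rho n = mat n n (\<lambda>(k, j).
     1 / phi c gam nu rho n k * ww c gam nu n j * aa c gam nu rho j * MM c gam nu rho k j)"

definition Vvec :: "(nat \<Rightarrow> real) \<Rightarrow> (nat \<Rightarrow> real) \<Rightarrow> (nat \<Rightarrow> real) \<Rightarrow> (nat \<Rightarrow> real) \<Rightarrow> real \<Rightarrow> nat \<Rightarrow> real vec" where
  "Vvec c gam nu rho sigma n = vec n (\<lambda>k. real n / (gam k * sigma^2 * phi c gam nu rho n k))"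

definition Cterm :: "(nat \<Rightarrow> real) \<Rightarrow> (nat \<Rightarrow> real) \<Rightarrow> (nat \<Rightarrow> real) \<Rightarrow> (nat \<Rightarrow> real) \<Rightarrow> real \<Rightarrow> nat \<Rightarrow> nat \<Rightarrow> real" where
  "Cterm c gam nu rho sigma n k = 1 / (sigma * sqrt (real n)) *
     (\<Sum>j<n. (1 - zeta c gam nu j) / Theta c gam nu n j * MM c gam nu rho k j)"

definition rterm :: "(nat \<Rightarrow> real) \<Rightarrow> (nat \<Rightarrow> real) \<Rightarrow> (nat \<Rightarrow> real) \<Rightarrow> (nat \<Rightarrow> real) \<Rightarrow> real \<Rightarrow> nat \<Rightarrow> nat \<Rightarrow> real" where
  "rterm c gam nu rho sigma n k = 1 / (sigma * sqrt (real n)) * (rho k * nu k / c k * pp c gam nu k k)"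

definition Uvec :: "(nat \<Rightarrow> real) \<Rightarrow> (nat \<Rightarrow> real) \<Rightarrow> (nat \<Rightarrow> real) \<Rightarrow> (nat \<Rightarrow> real) \<Rightarrow> real \<Rightarrow> nat \<Rightarrow> real vec" where
  "Uvec c gam nu rho sigma n = vec n (\<lambda>k. - (1 / phi c gam nu rho n k) *
     (Cterm c gam nu rho sigma n k + rterm c gam nu rho sigma n k))"

definition gobj :: "(nat \<Rightarrow> real) \<Rightarrow> (nat \<Rightarrow> real) \<Rightarrow> (nat \<Rightarrow> real) \<Rightarrow> (nat \<Rightarrow> real) \<Rightarrow> real \<Rightarrow> nat \<Rightarrow> real mat \<Rightarrow> real vec \<Rightarrow> real" where
  "gobj c gam nu rho sigma n zQ zS =
     - (1 / real n) * (\<Sum>i<n.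
         (zQ $$ (i, i))^2 / (2 * c i)
       + gam i / 2 * (\<Sum>j<n. (nu j)^2 * (zQ $$ (i, j))^2)
       + gam i * sigma^2 / 2 * (zS $ i)^2
       + gam i * sigma / sqrt (real n) * zS $ i * (\<Sum>j<n. rho j * nu j * zQ $$ (i, j)))
     + (1 / real n) * (\<Sum>i<n. zQ $$ (i, i) / c i)"

definition feasible :: "nat \<Rightarrow> real mat \<Rightarrow> real vec \<Rightarrow> bool" where
  "feasible n zQ zS \<longleftrightarrow> zQ \<in> carrier_mat n n \<and> zS \<in> carrier_vec n \<and>
     (\<forall>j<n. (\<Sum>i<n. zQ $$ (i, j)) = 1) \<and> (\<Sum>k<n. zS $ k) = 0"

definition nonsingular_M_matrix :: "nat \<Rightarrow> real mat \<Rightarrow> bool" where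
  "nonsingular_M_matrix n A \<longleftrightarrow> A \<in> carrier_mat n n \<and>
     (\<exists>s B. B \<in> carrier_mat n n \<and> (\<forall>i<n. \<forall>j<n. B $$ (i, j) \<ge> 0) \<and>
            A = s \<cdot>\<^sub>m 1\<^sub>m n - B \<and> spectral_radius (map_mat complex_of_real B) < s)"

definition minv :: "nat \<Rightarrow> real mat \<Rightarrow> real mat" where
  "minv n A = (SOME B. B \<in> carrier_mat n n \<and> A * B = 1\<^sub>m n \<and> B * A = 1\<^sub>m n)"

end

theory Submission
  imports Defs
begin

text \<open>The matrix \<open>L\<close> is substochastic with respect to the positive weight \<open>\<phi>\<close>: the
  \<open>\<phi>\<close>-weighted column sums of \<open>L\<close> equal \<open>\<rho>\<^sub>j\<^sup>2 \<zeta>\<^sub>j / n < \<phi>\<^sub>j\<close>. Hence every nonnegative vector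
  with \<open>z \<le> L z\<close> vanishes, which yields \<open>spectral_radius L < 1\<close>, the invertibility of \<open>I - L\<close> and
  the nonnegativity of its inverse.

  Each row of the objective is, after completing the square, a sum of squares plus
  \<open>(\<sigma> z\<^sup>S\<^sub>i)\<^sup>2 (1 - \<Sum>\<rho>\<^sub>j\<^sup>2 / n)\<close>, so \<open>g\<close> is strictly concave and its maximiser on the affine set
  \<open>F\<^sub>n\<close> is the unique feasible point whose gradient is given by Lagrange multipliers: \<open>\<mu>\<^sub>j\<close> for
  the column constraints and \<open>\<theta>\<close> for \<open>\<Sum>z\<^sup>S = 0\<close>. The \<open>z\<^sup>Q\<close>-conditions express \<open>z\<^sup>Q\<close> through \<open>z\<^sup>S\<close>;
  substituting them into the \<open>z\<^sup>S\<close>-conditions gives \<open>(I - L) z\<^sup>S = \<theta> V + U\<close>, and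
  \<open>\<theta>\<^sup>\<star> = -\<Sum>v / \<Sum>u\<close> enforces \<open>\<Sum>z\<^sup>S = 0\<close>, where \<open>\<Sum>u > 0\<close> because \<open>V > 0\<close>.\<close>

lemma mult_mat_vec_nth_sum:
  assumes "A \<in> carrier_mat n m" "v \<in> carrier_vec m" "k < n"
  shows "(A *\<^sub>v v) $ k = (\<Sum>j<m. A $$ (k, j) * v $ j)"
  using assms by (simp add: scalar_prod_def atLeast0LessThan row_def)

lemma transpose_mult_vec_nth_sum:
  assumes "A \<in> carrier_mat n n" "v \<in> carrier_vec n" "j < n"
  shows "(transpose_mat A *\<^sub>v v) $ j = (\<Sum>k<n. A $$ (k, j) * v $ k)"
  using assms mult_mat_vec_nth_sum[of "transpose_mat A" n n v j] by simp

lemma one_minus_mult_vec_nth: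
  fixes L :: "'a :: comm_ring_1 mat"
  assumes "L \<in> carrier_mat n n" "v \<in> carrier_vec n" "k < n"
  shows "((1\<^sub>m n - L) *\<^sub>v v) $ k = v $ k - (\<Sum>j<n. L $$ (k, j) * v $ j)"
proof -
  have "((1\<^sub>m n - L) *\<^sub>v v) $ k = (\<Sum>j<n. (1\<^sub>m n - L) $$ (k, j) * v $ j)"
    using assms by (intro mult_mat_vec_nth_sum) auto
  also have "\<dots> = (\<Sum>j<n. (if k = j then v $ j else 0) - L $$ (k, j) * v $ j)"
    using assms by (intro sum.cong) (auto simp: algebra_simps)
  finally show ?thesis
    using assms(3) by (simp add: sum_subtractf)
qed

lemma minv_inverse:
  assumes A: "A \<in> carrier_mat n n" and det: "det A \<noteq> (0 :: real)"
  shows "minv n A \<in> carrier_mat n n" "A * minv n A = 1\<^sub>m n" "minv n A * A = 1\<^sub>m n"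
proof -
  have "\<exists>B. B \<in> carrier_mat n n \<and> A * B = 1\<^sub>m n \<and> B * A = 1\<^sub>m n"
    using det_non_zero_imp_unit[OF A det, of "()"] unfolding Units_def ring_mat_def by auto
  from someI_ex[OF this] show "minv n A \<in> carrier_mat n n" "A * minv n A = 1\<^sub>m n" "minv n A * A = 1\<^sub>m n"
    unfolding minv_def by auto
qed

locale weighted_substochastic =
  fixes n :: nat and L :: "real mat" and f :: "real vec"
  assumes L_carrier: "L \<in> carrier_mat n n" and f_carrier: "f \<in> carrier_vec n"
    and L_nonneg: "\<And>i j. i < n \<Longrightarrow> j < n \<Longrightarrow> L $$ (i, j) \<ge> 0"
    and f_pos: "\<And>k. k < n \<Longrightarrow> f $ k > 0"
    and transpose_f_less: "\<And>j. j < n \<Longrightarrow> (transpose_mat L *\<^sub>v f) $ j < f $ j"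
begin

text \<open>Pairing a nonnegative subinvariant vector with the weight f gives
  \<open>f\<^sup>T z \<le> f\<^sup>T L z = (L\<^sup>T f)\<^sup>T z\<close>, which is strict as soon as z has a positive entry.\<close>
lemma nonneg_subinvariant_eq_0:
  fixes z :: "nat \<Rightarrow> real"
  assumes nonneg: "\<And>k. k < n \<Longrightarrow> z k \<ge> 0"
    and sub: "\<And>k. k < n \<Longrightarrow> z k \<le> (\<Sum>j<n. L $$ (k, j) * z j)"
    and k: "k < n"
  shows "z k = 0"
proof (rule ccontr)
  assume "z k \<noteq> 0"
  with nonneg k have zk: "z k > 0" by force
  have col: "(\<Sum>i<n. L $$ (i, j) * f $ i) < f $ j" if "j < n" for j
    using transpose_f_less[OF that] transpose_mult_vec_nth_sum[OF L_carrier f_carrier that] by simp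
  have "(\<Sum>i<n. f $ i * z i) \<le> (\<Sum>i<n. f $ i * (\<Sum>j<n. L $$ (i, j) * z j))"
    using f_pos sub by (intro sum_mono mult_left_mono) (auto simp: less_imp_le)
  also have "\<dots> = (\<Sum>j<n. z j * (\<Sum>i<n. L $$ (i, j) * f $ i))"
    unfolding sum_distrib_left by (subst sum.swap) (simp add: mult_ac)
  also have "\<dots> < (\<Sum>j<n. z j * f $ j)"
  proof (rule sum_strict_mono_ex1)
    show "\<forall>j\<in>{..<n}. z j * (\<Sum>i<n. L $$ (i, j) * f $ i) \<le> z j * f $ j"
      using col nonneg by (auto intro: mult_left_mono less_imp_le)
    show "\<exists>j\<in>{..<n}. z j * (\<Sum>i<n. L $$ (i, j) * f $ i) < z j * f $ j"
      using col[OF k] zk k by (intro bexI[of _ k] mult_strict_left_mono) auto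
  qed simp
  finally show False by (simp add: mult.commute)
qed

lemma norm_dominated_eq_0:
  fixes x :: "'a :: real_normed_field vec"
  assumes x: "x \<in> carrier_vec n"
    and dom: "\<And>k. k < n \<Longrightarrow> norm (x $ k) \<le> norm (\<Sum>j<n. of_real (L $$ (k, j)) * x $ j)"
  shows "x = 0\<^sub>v n"
proof -
  have "norm (x $ k) \<le> (\<Sum>j<n. L $$ (k, j) * norm (x $ j))" if k: "k < n" for k
  proof -
    have "norm (\<Sum>j<n. of_real (L $$ (k, j)) * x $ j) \<le> (\<Sum>j<n. norm (of_real (L $$ (k, j)) * x $ j))"
      by (rule norm_sum)
    also have "\<dots> = (\<Sum>j<n. L $$ (k, j) * norm (x $ j))"
      using k L_nonneg by (intro sum.cong) (auto simp: norm_mult)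
    finally show ?thesis using dom[OF k] by linarith
  qed
  then have "norm (x $ k) = 0" if "k < n" for k
    using that by (intro nonneg_subinvariant_eq_0[of "\<lambda>k. norm (x $ k)"]) auto
  then show ?thesis using x by (intro eq_vecI) auto
qed

lemma spectral_radius_less_1:
  assumes "n > 0"
  shows "spectral_radius (map_mat complex_of_real L) < 1"
proof -
  let ?C = "map_mat complex_of_real L"
  have C: "?C \<in> carrier_mat n n" using L_carrier by simp
  have "norm lam < 1" if "lam \<in> spectrum ?C" for lam
  proof (rule ccontr)
    assume big: "\<not> norm lam < 1"
    from that obtain x where x: "x \<in> carrier_vec n" "x \<noteq> 0\<^sub>v n" "?C *\<^sub>v x = lam \<cdot>\<^sub>v x"
      unfolding spectrum_def eigenvalue_def eigenvector_def using C by auto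
    have "norm (x $ k) \<le> norm (\<Sum>j<n. of_real (L $$ (k, j)) * x $ j)" if k: "k < n" for k
    proof -
      have "norm (x $ k) \<le> norm lam * norm (x $ k)"
        using big by (simp add: mult_le_cancel_right1)
      also have "\<dots> = norm ((?C *\<^sub>v x) $ k)"
        using x k by (simp add: norm_mult)
      also have "\<dots> = norm (\<Sum>j<n. of_real (L $$ (k, j)) * x $ j)"
        using mult_mat_vec_nth_sum[OF C x(1) k] k L_carrier by simp
      finally show ?thesis .
    qed
    with norm_dominated_eq_0[OF x(1)] x(2) show False by blast
  qed
  with spectral_radius_mem_max(1)[OF C assms] show ?thesis by auto
qed

lemma det_one_minus_neq_0: "det (1\<^sub>m n - L) \<noteq> 0"
proof
  assume "det (1\<^sub>m n - L) = 0"
  then obtain v where v: "v \<in> carrier_vec n" "v \<noteq> 0\<^sub>v n" "(1\<^sub>m n - L) *\<^sub>v v = 0\<^sub>v n"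
    using det_0_iff_vec_prod_zero[OF minus_carrier_mat[OF L_carrier]] by auto
  have fixed: "v $ k = (\<Sum>j<n. L $$ (k, j) * v $ j)" if "k < n" for k
    using one_minus_mult_vec_nth[OF L_carrier v(1) that] v(3) that by simp
  have "norm (v $ k) \<le> norm (\<Sum>j<n. of_real (L $$ (k, j)) * v $ j)" if "k < n" for k
    by (subst fixed[OF that]) simp
  then have "v = 0\<^sub>v n"
    by (rule norm_dominated_eq_0[OF v(1)])
  with v(2) show False ..
qed

lemmas minv_one_minus = minv_inverse[OF minus_carrier_mat[OF L_carrier] det_one_minus_neq_0]

lemma invertible_one_minus: "invertible_mat (1\<^sub>m n - L)"
  using minv_one_minus L_carrier
  unfolding invertible_mat_def inverts_mat_def square_mat.simps by auto

lemma nonneg_if_one_minus_nonneg: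
  fixes y :: "nat \<Rightarrow> real"
  assumes "\<And>k. k < n \<Longrightarrow> y k - (\<Sum>j<n. L $$ (k, j) * y j) \<ge> 0" and "k < n"
  shows "y k \<ge> 0"
proof -
  define z where "z k = max (- y k) 0" for k
  have sub: "z k \<le> (\<Sum>j<n. L $$ (k, j) * z j)" if k: "k < n" for k
  proof -
    have "- y k \<le> (\<Sum>j<n. L $$ (k, j) * (- y j))"
      using assms(1)[OF k] by (simp add: sum_negf)
    also have "\<dots> \<le> (\<Sum>j<n. L $$ (k, j) * z j)"
      using k L_nonneg by (intro sum_mono mult_left_mono) (auto simp: z_def)
    finally show ?thesis
      using k L_nonneg by (auto simp: z_def intro!: sum_nonneg)
  qed
  have "z k = 0"
    by (rule nonneg_subinvariant_eq_0[of z, OF _ sub assms(2)]) (simp add: z_def)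
  then show ?thesis by (simp add: z_def)
qed

lemma minv_one_minus_nonneg:
  assumes k: "k < n" and j: "j < n"
  shows "minv n (1\<^sub>m n - L) $$ (k, j) \<ge> 0"
proof (rule nonneg_if_one_minus_nonneg[of "\<lambda>i. minv n (1\<^sub>m n - L) $$ (i, j)", OF _ k])
  let ?W = "minv n (1\<^sub>m n - L)"
  fix i assume i: "i < n"
  have "((1\<^sub>m n - L) * ?W) $$ (i, j) = ((1\<^sub>m n - L) *\<^sub>v col ?W j) $ i"
    using i j carrier_matD[OF minv_one_minus(1)] carrier_matD[OF L_carrier] by simp
  also have "\<dots> = ?W $$ (i, j) - (\<Sum>l<n. L $$ (i, l) * ?W $$ (l, j))"
    using one_minus_mult_vec_nth[OF L_carrier _ i, of "col ?W j"] i j minv_one_minus(1) by simp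
  finally show "?W $$ (i, j) - (\<Sum>l<n. L $$ (i, l) * ?W $$ (l, j)) \<ge> 0"
    using minv_one_minus(2) i j by (simp split: if_splits)
qed

lemma one_minus_mult_minv:
  assumes x: "x \<in> carrier_vec n" and k: "k < n"
  shows "(minv n (1\<^sub>m n - L) *\<^sub>v x) $ k
    - (\<Sum>j<n. L $$ (k, j) * (minv n (1\<^sub>m n - L) *\<^sub>v x) $ j) = x $ k"
proof -
  have "(1\<^sub>m n - L) *\<^sub>v (minv n (1\<^sub>m n - L) *\<^sub>v x) = x"
    using assoc_mult_mat_vec[OF minus_carrier_mat[OF L_carrier] minv_one_minus(1) x, of "1\<^sub>m n"]
      minv_one_minus(2) x by simp
  then show ?thesis
    using one_minus_mult_vec_nth[OF L_carrier _ k, of "minv n (1\<^sub>m n - L) *\<^sub>v x"]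
      minv_one_minus(1) x by simp
qed

lemma nonsingular_M_matrix_one_minus:
  assumes "n > 0"
  shows "nonsingular_M_matrix n (1\<^sub>m n - L)"
  unfolding nonsingular_M_matrix_def
proof (intro conjI exI[of _ 1] exI[of _ L])
  show "1\<^sub>m n - L = 1 \<cdot>\<^sub>m 1\<^sub>m n - L"
    using L_carrier by (intro eq_matI) auto
  show "\<forall>i<n. \<forall>j<n. L $$ (i, j) \<ge> 0"
    using L_nonneg by blast
qed (simp_all add: minus_carrier_mat L_carrier spectral_radius_less_1[OF assms])

end


locale mfg_data =
  fixes n :: nat and sigma :: real and c gam nu rho :: "nat \<Rightarrow> real"
begin

definition row_cost :: "nat \<Rightarrow> (nat \<Rightarrow> nat \<Rightarrow> real) \<Rightarrow> (nat \<Rightarrow> real) \<Rightarrow> real" where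
  "row_cost i Q S =
     (Q i i)^2 / (2 * c i) + gam i / 2 * (\<Sum>j<n. (nu j)^2 * (Q i j)^2)
       + gam i * sigma^2 / 2 * (S i)^2 + gam i * sigma / sqrt n * S i * (\<Sum>j<n. rho j * nu j * Q i j)"

definition objective :: "(nat \<Rightarrow> nat \<Rightarrow> real) \<Rightarrow> (nat \<Rightarrow> real) \<Rightarrow> real" where
  "objective Q S = - (1 / n) * (\<Sum>i<n. row_cost i Q S) + (1 / n) * (\<Sum>i<n. Q i i / c i)"

definition grad_Q :: "(nat \<Rightarrow> nat \<Rightarrow> real) \<Rightarrow> (nat \<Rightarrow> real) \<Rightarrow> nat \<Rightarrow> nat \<Rightarrow> real" where
  "grad_Q Q S i j = (if i = j then Q i i / c i else 0) + gam i * (nu j)^2 * Q i j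
     + gam i * sigma / sqrt n * S i * rho j * nu j"

definition grad_S :: "(nat \<Rightarrow> nat \<Rightarrow> real) \<Rightarrow> (nat \<Rightarrow> real) \<Rightarrow> nat \<Rightarrow> real" where
  "grad_S Q S i = gam i * sigma^2 * S i + gam i * sigma / sqrt n * (\<Sum>j<n. rho j * nu j * Q i j)"

lemma gobj_eq_objective:
  "gobj c gam nu rho sigma n zQ zS = objective (\<lambda>i j. zQ $$ (i, j)) (\<lambda>i. zS $ i)"
  by (simp add: gobj_def objective_def row_cost_def)

lemma row_cost_add:
  assumes i: "i < n"
  shows "row_cost i (\<lambda>i j. Q i j + D i j) (\<lambda>i. S i + E i)
    = row_cost i Q S + (\<Sum>j<n. D i j * grad_Q Q S i j) + E i * grad_S Q S i + row_cost i D E"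
proof -
  have diag: "(Q i i + D i i)^2 / (2 * c i) = (Q i i)^2 / (2 * c i) + D i i * (Q i i / c i) + (D i i)^2 / (2 * c i)"
    by (simp add: add_divide_distrib power2_sum)
  have squares: "(\<Sum>j<n. (nu j)^2 * (Q i j + D i j)^2) = (\<Sum>j<n. (nu j)^2 * (Q i j)^2)
      + 2 * (\<Sum>j<n. D i j * ((nu j)^2 * Q i j)) + (\<Sum>j<n. (nu j)^2 * (D i j)^2)"
    by (simp add: power2_sum algebra_simps sum.distrib sum_distrib_left)
  have cross: "(\<Sum>j<n. rho j * nu j * (Q i j + D i j))
      = (\<Sum>j<n. rho j * nu j * Q i j) + (\<Sum>j<n. rho j * nu j * D i j)"
    by (simp add: algebra_simps sum.distrib)
  have "(\<Sum>j<n. D i j * grad_Q Q S i j)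
      = (\<Sum>j<n. (if i = j then D i i * (Q i i / c i) else 0) + gam i * (D i j * ((nu j)^2 * Q i j))
          + gam i * sigma / sqrt n * S i * (rho j * nu j * D i j))"
    unfolding grad_Q_def by (intro sum.cong) (auto simp: algebra_simps)
  also have "\<dots> = D i i * (Q i i / c i) + gam i * (\<Sum>j<n. D i j * ((nu j)^2 * Q i j))
      + gam i * sigma / sqrt n * S i * (\<Sum>j<n. rho j * nu j * D i j)"
    using i by (simp add: sum.distrib sum_distrib_left)
  finally have lin: "(\<Sum>j<n. D i j * grad_Q Q S i j) = \<dots>" .
  show ?thesis
    unfolding row_cost_def diag squares cross lin grad_S_def by (simp add: ring_distribs power2_sum)
qed

lemma grad_cong:
  assumes "\<And>i j. i < n \<Longrightarrow> j < n \<Longrightarrow> Q i j = Q' i j" and "\<And>i. i < n \<Longrightarrow> S i = S' i"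
    and "i < n"
  shows "j < n \<Longrightarrow> grad_Q Q S i j = grad_Q Q' S' i j" and "grad_S Q S i = grad_S Q' S' i"
  using assms by (simp_all add: grad_Q_def grad_S_def)

lemma objective_add_at_stationary:
  assumes grad_Q: "\<And>i j. i < n \<Longrightarrow> j < n \<Longrightarrow> grad_Q Q S i j = m j + (if i = j then 1 / c i else 0)"
    and grad_S: "\<And>i. i < n \<Longrightarrow> grad_S Q S i = t"
    and D: "\<And>j. j < n \<Longrightarrow> (\<Sum>i<n. D i j) = 0" and E: "(\<Sum>i<n. E i) = 0"
  shows "objective (\<lambda>i j. Q i j + D i j) (\<lambda>i. S i + E i)
    = objective Q S - (\<Sum>i<n. row_cost i D E) / n"
proof -
  have "(\<Sum>i<n. \<Sum>j<n. D i j * grad_Q Q S i j)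
      = (\<Sum>i<n. \<Sum>j<n. m j * D i j) + (\<Sum>i<n. \<Sum>j<n. if i = j then D i i / c i else 0)"
    unfolding sum.distrib[symmetric] using grad_Q by (intro sum.cong refl) (auto simp: algebra_simps)
  also have "(\<Sum>i<n. \<Sum>j<n. m j * D i j) = (\<Sum>j<n. m j * (\<Sum>i<n. D i j))"
    by (subst sum.swap) (simp add: sum_distrib_left)
  finally have lin_Q: "(\<Sum>i<n. \<Sum>j<n. D i j * grad_Q Q S i j) = (\<Sum>i<n. D i i / c i)"
    using D by simp
  have lin_S: "(\<Sum>i<n. E i * grad_S Q S i) = 0"
    using grad_S E by (simp add: sum_distrib_right[symmetric])
  have "(\<Sum>i<n. row_cost i (\<lambda>i j. Q i j + D i j) (\<lambda>i. S i + E i))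
      = (\<Sum>i<n. row_cost i Q S) + (\<Sum>i<n. \<Sum>j<n. D i j * grad_Q Q S i j)
        + (\<Sum>i<n. E i * grad_S Q S i) + (\<Sum>i<n. row_cost i D E)"
    unfolding sum.distrib[symmetric] by (intro sum.cong refl) (simp add: row_cost_add)
  then show ?thesis
    unfolding objective_def lin_Q lin_S by (simp add: sum.distrib add_divide_distrib algebra_simps)
qed

end

locale mfg = mfg_data +
  assumes n_pos: "n \<ge> 1" and sigma_pos: "sigma > 0"
    and c_pos: "\<forall>i<n. c i > 0" and gam_pos: "\<forall>i<n. gam i > 0"
    and nu_pos: "\<forall>i<n. nu i > 0" and rho_bd: "\<forall>i<n. -1 < rho i \<and> rho i < 1"
begin

lemma pp_pos: "i < n \<Longrightarrow> j < n \<Longrightarrow> pp c gam nu i j > 0"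
  using c_pos gam_pos nu_pos by (auto simp: pp_def intro!: add_pos_pos)

lemma gam_nu_sq_pp:
  assumes i: "i < n" and j: "j < n"
  shows "gam i * (nu j)^2 * pp c gam nu i j = (if i = j then 1 - zeta c gam nu j else 1)"
proof (cases "i = j")
  case True
  have pos: "c j > 0" "gam j > 0" "nu j > 0"
    using j c_pos gam_pos nu_pos by auto
  then have "gam j * (nu j)^2 + 1 / c j > 0" "c j + c j * (c j * (gam j * (nu j)^2)) > 0"
    by (auto intro!: add_pos_pos mult_pos_pos)
  with True pos show ?thesis
    by (simp add: pp_def zeta_def field_simps)
next
  case False
  have "gam i > 0" "nu j > 0"
    using i j gam_pos nu_pos by auto
  with False show ?thesis
    by (simp add: pp_def)
qed

lemma zeta_pos: "j < n \<Longrightarrow> zeta c gam nu j > 0"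
  using pp_pos c_pos by (simp add: zeta_def)

lemma Theta_pos: "j < n \<Longrightarrow> Theta c gam nu n j > 0"
  unfolding Theta_def using n_pos pp_pos by (intro sum_pos) auto

lemma sqrt_n: "sqrt (real n) > 0" "sqrt (real n) * sqrt (real n) = real n"
  using n_pos by auto

lemma sum_rho_sq_less: "(\<Sum>j<n. (rho j)^2) < real n"
proof -
  have "(\<Sum>j<n. (rho j)^2) < (\<Sum>j<n. 1)"
    using n_pos rho_bd by (intro sum_strict_mono) (auto simp: abs_square_less_1 lessThan_empty_iff)
  then show ?thesis by simp
qed

lemma phi_eq:
  assumes k: "k < n"
  shows "phi c gam nu rho n k = 1 - (\<Sum>j<n. (rho j)^2) / n + (rho k)^2 * zeta c gam nu k / n"
proof -
  have "gam k * upsilon c gam nu rho n k = (\<Sum>j<n. (rho j)^2 * (gam k * (nu j)^2 * pp c gam nu k j))"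
    unfolding upsilon_def sum_distrib_left by (rule sum.cong) (auto simp: mult_ac)
  also have "\<dots> = (\<Sum>j<n. (rho j)^2 - (if j = k then (rho k)^2 * zeta c gam nu k else 0))"
    using k by (intro sum.cong) (auto simp: gam_nu_sq_pp right_diff_distrib)
  also have "\<dots> = (\<Sum>j<n. (rho j)^2) - (rho k)^2 * zeta c gam nu k"
    using k by (simp add: sum_subtractf)
  finally show ?thesis
    by (simp add: phi_def diff_divide_distrib)
qed

lemma phi_pos:
  assumes k: "k < n"
  shows "phi c gam nu rho n k > 0"
proof -
  have "(\<Sum>j<n. (rho j)^2) / n < 1"
    using sum_rho_sq_less n_pos by simp
  moreover have "(rho k)^2 * zeta c gam nu k / n \<ge> 0"
    using zeta_pos[OF k] by simp
  ultimately show ?thesis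
    using phi_eq[OF k] by linarith
qed

lemma Lmat_entry:
  assumes "k < n" "j < n"
  shows "Lmat c gam nu rho n $$ (k, j)
    = (rho j)^2 * zeta c gam nu j * pp c gam nu k j / (n * phi c gam nu rho n k * Theta c gam nu n j)"
proof -
  have "nu j > 0"
    using assms nu_pos by simp
  then show ?thesis
    using assms by (simp add: Lmat_def ww_def aa_def MM_def power2_eq_square mult_ac)
qed

lemma Lmat_col_weighted_sum:
  assumes j: "j < n"
  shows "(\<Sum>k<n. Lmat c gam nu rho n $$ (k, j) * phi c gam nu rho n k)
    = (rho j)^2 * zeta c gam nu j / n"
proof -
  have "(\<Sum>k<n. Lmat c gam nu rho n $$ (k, j) * phi c gam nu rho n k)
      = (\<Sum>k<n. (rho j)^2 * zeta c gam nu j / (n * Theta c gam nu n j) * pp c gam nu k j)"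
  proof (rule sum.cong)
    fix k assume "k \<in> {..<n}"
    with j phi_pos[of k] show "Lmat c gam nu rho n $$ (k, j) * phi c gam nu rho n k
      = (rho j)^2 * zeta c gam nu j / (n * Theta c gam nu n j) * pp c gam nu k j"
      by (simp add: Lmat_entry)
  qed simp
  also have "\<dots> = (rho j)^2 * zeta c gam nu j / (n * Theta c gam nu n j) * Theta c gam nu n j"
    by (simp add: Theta_def sum_distrib_left)
  also have "\<dots> = (rho j)^2 * zeta c gam nu j / n"
    using Theta_pos[OF j] by simp
  finally show ?thesis .
qed

sublocale L: weighted_substochastic n "Lmat c gam nu rho n" "phi_vec c gam nu rho n"
proof
  show L_carrier: "Lmat c gam nu rho n \<in> carrier_mat n n"
    by (simp add: Lmat_def)
  show "phi_vec c gam nu rho n \<in> carrier_vec n"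
    by (simp add: phi_vec_def)
  show "Lmat c gam nu rho n $$ (i, j) \<ge> 0" if "i < n" "j < n" for i j
    unfolding Lmat_entry[OF that] using that zeta_pos[of j] pp_pos[of i j] phi_pos[of i] Theta_pos[of j] n_pos
    by (intro divide_nonneg_pos mult_nonneg_nonneg mult_pos_pos) auto
  show "phi_vec c gam nu rho n $ k > 0" if "k < n" for k
    using that phi_pos[of k] by (simp add: phi_vec_def)
  show "(transpose_mat (Lmat c gam nu rho n) *\<^sub>v phi_vec c gam nu rho n) $ j < phi_vec c gam nu rho n $ j"
    if j: "j < n" for j
  proof -
    have "(\<Sum>j<n. (rho j)^2) / n < 1"
      using sum_rho_sq_less n_pos by simp
    then have "(rho j)^2 * zeta c gam nu j / n < phi c gam nu rho n j"
      using phi_eq[OF j] by linarith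
    then show ?thesis
      using transpose_mult_vec_nth_sum[OF L_carrier _ j, of "phi_vec c gam nu rho n"]
        Lmat_col_weighted_sum[OF j] j by (simp add: phi_vec_def)
  qed
qed

lemma row_cost_eq_sum_squares:
  "row_cost i D E = (D i i)^2 / (2 * c i) + gam i / 2 *
     ((\<Sum>j<n. (nu j * D i j + sigma * E i * rho j / sqrt n)^2)
      + (sigma * E i)^2 * (1 - (\<Sum>j<n. (rho j)^2) / n))"
proof -
  have "(nu j * D i j + sigma * E i * rho j / sqrt n)^2
      = (nu j)^2 * (D i j)^2 + 2 * sigma * E i / sqrt n * (rho j * nu j * D i j)
        + (sigma * E i)^2 / n * (rho j)^2" for j
    by (simp add: power2_sum power_mult_distrib power_divide algebra_simps)
  then have "(\<Sum>j<n. (nu j * D i j + sigma * E i * rho j / sqrt n)^2)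
      = (\<Sum>j<n. (nu j)^2 * (D i j)^2) + 2 * sigma * E i / sqrt n * (\<Sum>j<n. rho j * nu j * D i j)
        + (sigma * E i)^2 / n * (\<Sum>j<n. (rho j)^2)"
    by (simp add: sum.distrib sum_distrib_left)
  moreover have "gam i / 2 * A + gam i * sigma^2 / 2 * e^2 + gam i * sigma / sqrt n * e * B
      = gam i / 2 * ((A + 2 * sigma * e / sqrt n * B + (sigma * e)^2 / n * R)
          + (sigma * e)^2 * (1 - R / n))" for A B R e :: real
    using sqrt_n n_pos by (simp add: field_simps power2_eq_square)
  ultimately show ?thesis
    unfolding row_cost_def by (simp add: add.assoc)
qed

lemma row_cost_nonneg:
  assumes i: "i < n"
  shows "row_cost i D E \<ge> 0"
  unfolding row_cost_eq_sum_squares using i c_pos gam_pos sum_rho_sq_less n_pos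
  by (intro add_nonneg_nonneg mult_nonneg_nonneg sum_nonneg) (auto simp: less_imp_le)

lemma row_cost_pos:
  assumes i: "i < n" and nonzero: "E i \<noteq> 0 \<or> (\<exists>j<n. D i j \<noteq> 0)"
  shows "row_cost i D E > 0"
proof -
  define squares where "squares = (\<Sum>j<n. (nu j * D i j + sigma * E i * rho j / sqrt n)^2)"
  have q: "1 - (\<Sum>j<n. (rho j)^2) / n > 0"
    using sum_rho_sq_less n_pos by simp
  have "squares + (sigma * E i)^2 * (1 - (\<Sum>j<n. (rho j)^2) / n) > 0"
  proof (cases "E i = 0")
    case False
    then have "(sigma * E i)^2 * (1 - (\<Sum>j<n. (rho j)^2) / n) > 0"
      using q sigma_pos by simp
    moreover have "squares \<ge> 0"
      unfolding squares_def by (simp add: sum_nonneg)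
    ultimately show ?thesis by simp
  next
    case True
    with nonzero obtain j where j: "j < n" "D i j \<noteq> 0" by auto
    moreover have "nu j > 0"
      using j nu_pos by simp
    ultimately have "0 < (nu j * D i j + sigma * E i * rho j / sqrt n)^2"
      using True by simp
    also have "\<dots> \<le> squares"
      unfolding squares_def using j by (intro member_le_sum) auto
    finally show ?thesis
      using True by simp
  qed
  then have "gam i / 2 * (squares + (sigma * E i)^2 * (1 - (\<Sum>j<n. (rho j)^2) / n)) > 0"
    using i gam_pos by simp
  then show ?thesis
    unfolding row_cost_eq_sum_squares squares_def[symmetric]
    by (rule add_nonneg_pos[rotated]) (use i c_pos in \<open>simp add: less_imp_le\<close>)
qed

text \<open>The objective is strictly concave and the constraints are affine, so a feasible
  point at which the gradient is orthogonal to all feasible directions is the unique maximiser.\<close>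
lemma stationary_unique_max:
  assumes feasible: "feasible n zQ zS"
    and grad_Q: "\<And>i j. i < n \<Longrightarrow> j < n \<Longrightarrow>
      grad_Q (\<lambda>i j. zQ $$ (i, j)) (\<lambda>i. zS $ i) i j = m j + (if i = j then 1 / c i else 0)"
    and grad_S: "\<And>i. i < n \<Longrightarrow> grad_S (\<lambda>i j. zQ $$ (i, j)) (\<lambda>i. zS $ i) i = t"
    and other: "feasible n zQ' zS'" "(zQ', zS') \<noteq> (zQ, zS)"
  shows "gobj c gam nu rho sigma n zQ' zS' < gobj c gam nu rho sigma n zQ zS"
proof -
  define D where "D i j = zQ' $$ (i, j) - zQ $$ (i, j)" for i j
  define E where "E i = zS' $ i - zS $ i" for i
  have "\<exists>i<n. E i \<noteq> 0 \<or> (\<exists>j<n. D i j \<noteq> 0)"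
  proof (rule ccontr)
    assume "\<not> ?thesis"
    then have "zQ' = zQ" "zS' = zS"
      using feasible other(1) unfolding feasible_def D_def E_def by (auto intro: eq_matI eq_vecI)
    with other(2) show False by simp
  qed
  then obtain i0 where "i0 < n" "row_cost i0 D E > 0"
    using row_cost_pos by blast
  then have "(\<Sum>i<n. row_cost i D E) > 0"
    using row_cost_nonneg by (intro sum_pos2[of _ i0]) auto
  moreover have "gobj c gam nu rho sigma n zQ' zS'
      = gobj c gam nu rho sigma n zQ zS - (\<Sum>i<n. row_cost i D E) / n"
  proof -
    have "objective (\<lambda>i j. zQ' $$ (i, j)) (\<lambda>i. zS' $ i)
        = objective (\<lambda>i j. zQ $$ (i, j) + D i j) (\<lambda>i. zS $ i + E i)"
      by (simp add: D_def E_def)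
    also have "\<dots> = objective (\<lambda>i j. zQ $$ (i, j)) (\<lambda>i. zS $ i) - (\<Sum>i<n. row_cost i D E) / n"
      using feasible other(1) unfolding feasible_def D_def E_def
      by (intro objective_add_at_stationary[OF grad_Q grad_S]) (auto simp: sum_subtractf)
    finally show ?thesis
      by (simp add: gobj_eq_objective)
  qed
  ultimately show ?thesis
    using n_pos by simp
qed

definition mu_of :: "(nat \<Rightarrow> real) \<Rightarrow> nat \<Rightarrow> real" where
  "mu_of z j = 1 / (n * Theta c gam nu n j) *
     (1 - zeta c gam nu j - sigma / sqrt n * aa c gam nu rho j * z j)"

text \<open>The solution of \<open>grad_Q Q z i j = n * mu_of z j + (if i = j then 1 / c i else 0)\<close> for
  \<open>Q i j\<close>; \<open>mu_of z\<close> is then the multiplier that makes the columns sum to 1 when \<open>\<Sum>z = 0\<close>.\<close>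
definition zQ_of :: "(nat \<Rightarrow> real) \<Rightarrow> nat \<Rightarrow> nat \<Rightarrow> real" where
  "zQ_of z i j = pp c gam nu i j *
     (n * mu_of z j + (if i = j then 1 / c i else 0) - gam i * sigma / sqrt n * z i * rho j * nu j)"

lemma n_mu_of:
  assumes "j < n"
  shows "n * mu_of z j = (1 - zeta c gam nu j) / Theta c gam nu n j
    - sigma / sqrt n * (aa c gam nu rho j * z j / Theta c gam nu n j)"
  using n_pos Theta_pos[OF assms] by (simp add: mu_of_def field_simps)

lemma pp_mult_grad_coeff:
  assumes i: "i < n" and j: "j < n"
  shows "pp c gam nu i j * ((if i = j then 1 / c i else 0) + gam i * (nu j)^2) = 1"
  using i j c_pos gam_pos nu_pos pp_pos[OF i j] by (auto simp: pp_def add_pos_pos)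

lemma grad_Q_zQ_of:
  assumes i: "i < n" and j: "j < n"
  shows "grad_Q (zQ_of z) z i j = n * mu_of z j + (if i = j then 1 / c i else 0)"
proof -
  have "grad_Q (zQ_of z) z i j
      = zQ_of z i j * ((if i = j then 1 / c i else 0) + gam i * (nu j)^2)
        + gam i * sigma / sqrt n * z i * rho j * nu j"
    by (auto simp: grad_Q_def algebra_simps)
  also have "zQ_of z i j * ((if i = j then 1 / c i else 0) + gam i * (nu j)^2)
      = n * mu_of z j + (if i = j then 1 / c i else 0) - gam i * sigma / sqrt n * z i * rho j * nu j"
    using pp_mult_grad_coeff[OF i j] unfolding zQ_of_def by (simp only: mult_ac) simp
  finally show ?thesis by simp
qed

lemma zQ_of_col_sum:
  assumes z0: "(\<Sum>i<n. z i) = 0" and j: "j < n"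
  shows "(\<Sum>i<n. zQ_of z i j) = 1"
proof -
  have nu_j: "nu j > 0"
    using nu_pos j by simp
  have split: "(\<Sum>i<n. zQ_of z i j) = Theta c gam nu n j * (n * mu_of z j)
      + (\<Sum>i<n. if i = j then pp c gam nu j j / c j else 0)
      - sigma / sqrt n * rho j * nu j * (\<Sum>i<n. gam i * pp c gam nu i j * z i)"
    unfolding zQ_of_def Theta_def sum_distrib_right sum_distrib_left
      sum_subtractf[symmetric] sum.distrib[symmetric]
    by (rule sum.cong) (auto simp: algebra_simps)
  have "(\<Sum>i<n. gam i * pp c gam nu i j * z i)
      = (\<Sum>i<n. (gam i * (nu j)^2 * pp c gam nu i j) * z i) / (nu j)^2"
    using nu_j by (simp add: sum_divide_distrib mult.assoc)
  also have "\<dots> = (\<Sum>i<n. z i - (if i = j then zeta c gam nu j * z j else 0)) / (nu j)^2"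
    by (intro arg_cong[where f = "\<lambda>x. x / (nu j)^2"] sum.cong)
      (use j gam_nu_sq_pp in \<open>auto simp: algebra_simps\<close>)
  also have "\<dots> = - zeta c gam nu j * z j / (nu j)^2"
    using j z0 by (simp add: sum_subtractf)
  finally have "(\<Sum>i<n. gam i * pp c gam nu i j * z i) = - zeta c gam nu j * z j / (nu j)^2" .
  with split show ?thesis
    using j nu_j Theta_pos[OF j] sqrt_n
    by (simp add: mu_of_def zeta_def aa_def power2_eq_square field_simps)
qed

lemma Lmat_row_sum:
  assumes i: "i < n"
  shows "(\<Sum>j<n. MM c gam nu rho i j * (aa c gam nu rho j * z j / Theta c gam nu n j))
    = n * phi c gam nu rho n i * (\<Sum>j<n. Lmat c gam nu rho n $$ (i, j) * z j)"
  unfolding sum_distrib_left using i phi_pos[OF i] n_pos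
  by (intro sum.cong) (auto simp: Lmat_def ww_def)

lemma rho_nu_zQ_of_sum:
  assumes i: "i < n"
  shows "(\<Sum>j<n. rho j * nu j * zQ_of z i j)
    = sigma * sqrt n * (Cterm c gam nu rho sigma n i + rterm c gam nu rho sigma n i
        - phi c gam nu rho n i * (\<Sum>j<n. Lmat c gam nu rho n $$ (i, j) * z j))
      - gam i * sigma / sqrt n * z i * upsilon c gam nu rho n i"
proof -
  have "(\<Sum>j<n. rho j * nu j * zQ_of z i j)
      = (\<Sum>j<n. MM c gam nu rho i j * (n * mu_of z j))
        + (\<Sum>j<n. if i = j then rho i * nu i * pp c gam nu i i / c i else 0)
        - gam i * sigma / sqrt n * z i * upsilon c gam nu rho n i"
    unfolding zQ_of_def upsilon_def MM_def sum_distrib_left sum_subtractf[symmetric] sum.distrib[symmetric]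
    by (rule sum.cong) (auto simp: algebra_simps power2_eq_square)
  also have "(\<Sum>j<n. if i = j then rho i * nu i * pp c gam nu i i / c i else 0)
      = sigma * sqrt n * rterm c gam nu rho sigma n i"
    using i sigma_pos sqrt_n by (simp add: rterm_def)
  also have "(\<Sum>j<n. MM c gam nu rho i j * (n * mu_of z j))
      = (\<Sum>j<n. (1 - zeta c gam nu j) / Theta c gam nu n j * MM c gam nu rho i j
          - sigma / sqrt n * (MM c gam nu rho i j * (aa c gam nu rho j * z j / Theta c gam nu n j)))"
    by (intro sum.cong) (simp_all add: n_mu_of right_diff_distrib mult_ac)
  also have "\<dots> = sigma * sqrt n * Cterm c gam nu rho sigma n i
      - sigma / sqrt n * (\<Sum>j<n. MM c gam nu rho i j * (aa c gam nu rho j * z j / Theta c gam nu n j))"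
    unfolding sum_subtractf sum_distrib_left[symmetric] using sigma_pos sqrt_n by (simp add: Cterm_def)
  also have "(\<Sum>j<n. MM c gam nu rho i j * (aa c gam nu rho j * z j / Theta c gam nu n j))
      = n * (phi c gam nu rho n i * (\<Sum>j<n. Lmat c gam nu rho n $$ (i, j) * z j))"
    unfolding Lmat_row_sum[OF i] by (simp only: mult.assoc)
  also have "sigma / sqrt n * (n * (phi c gam nu rho n i * (\<Sum>j<n. Lmat c gam nu rho n $$ (i, j) * z j)))
      = sigma * sqrt n * (phi c gam nu rho n i * (\<Sum>j<n. Lmat c gam nu rho n $$ (i, j) * z j))"
    using real_div_sqrt[of "real n"] by (simp add: divide_simps)
  finally show ?thesis
    by (simp add: algebra_simps)
qed

lemma grad_S_zQ_of:
  fixes t :: real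
  assumes i: "i < n"
    and fixed: "z i - (\<Sum>j<n. Lmat c gam nu rho n $$ (i, j) * z j)
      = t * Vvec c gam nu rho sigma n $ i + Uvec c gam nu rho sigma n $ i"
  shows "grad_S (zQ_of z) z i = n * t"
proof -
  let ?phi = "phi c gam nu rho n i" and ?C = "Cterm c gam nu rho sigma n i"
    and ?r = "rterm c gam nu rho sigma n i" and ?Lz = "\<Sum>j<n. Lmat c gam nu rho n $$ (i, j) * z j"
  define s where "s = sqrt n"
  have s: "s > 0" "real n = s * s"
    using sqrt_n unfolding s_def by auto
  have pos: "gam i > 0" "?phi > 0"
    using i gam_pos phi_pos by auto
  have ups: "upsilon c gam nu rho n i = s * s * (1 - ?phi) / gam i"
    using s pos(1) by (simp add: phi_def field_simps)
  have "grad_S (zQ_of z) z i = gam i * sigma^2 * (?phi * (z i - ?Lz) + ?C + ?r)"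
    unfolding grad_S_def rho_nu_zQ_of_sum[OF i] s_def[symmetric] ups
    using s(1) pos(1) by (simp add: field_simps power2_eq_square)
  also have "\<dots> = n * t"
    unfolding fixed using i pos sigma_pos
    by (simp add: Vvec_def Uvec_def field_simps power2_eq_square)
  finally show ?thesis .
qed

abbreviation Winv :: "real mat" where
  "Winv \<equiv> minv n (1\<^sub>m n - Lmat c gam nu rho n)"

abbreviation u_vec :: "real vec" where
  "u_vec \<equiv> Winv *\<^sub>v Vvec c gam nu rho sigma n"

abbreviation v_vec :: "real vec" where
  "v_vec \<equiv> Winv *\<^sub>v Uvec c gam nu rho sigma n"

abbreviation theta_star :: real where
  "theta_star \<equiv> - (\<Sum>k<n. v_vec $ k) / (\<Sum>k<n. u_vec $ k)"

abbreviation zS_bar :: "real vec" where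
  "zS_bar \<equiv> theta_star \<cdot>\<^sub>v u_vec + v_vec"

abbreviation zQ_bar :: "real mat" where
  "zQ_bar \<equiv> mat n n (\<lambda>(i, j). zQ_of (\<lambda>k. zS_bar $ k) i j)"

lemma Vvec_carrier: "Vvec c gam nu rho sigma n \<in> carrier_vec n"
  and Uvec_carrier: "Uvec c gam nu rho sigma n \<in> carrier_vec n"
  by (simp_all add: Vvec_def Uvec_def)

lemma Vvec_pos: "k < n \<Longrightarrow> Vvec c gam nu rho sigma n $ k > 0"
  using phi_pos[of k] gam_pos sigma_pos n_pos by (simp add: Vvec_def)

lemma u_vec_pos:
  assumes k: "k < n"
  shows "u_vec $ k > 0"
proof -
  have u_nonneg: "u_vec $ j \<ge> 0" if j: "j < n" for j
    unfolding mult_mat_vec_nth_sum[OF L.minv_one_minus(1) Vvec_carrier j]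
    using j L.minv_one_minus_nonneg Vvec_pos by (intro sum_nonneg mult_nonneg_nonneg) (auto simp: less_imp_le)
  have "(\<Sum>j<n. Lmat c gam nu rho n $$ (k, j) * u_vec $ j) \<ge> 0"
    using k u_nonneg L.L_nonneg by (intro sum_nonneg) auto
  then show ?thesis
    using L.one_minus_mult_minv[OF Vvec_carrier k] Vvec_pos[OF k] by linarith
qed

lemma sum_u_vec_pos: "(\<Sum>k<n. u_vec $ k) > 0"
  using n_pos u_vec_pos by (intro sum_pos) (auto simp: lessThan_empty_iff)

lemma dim_row_Winv [simp]: "dim_row Winv = n"
  using L.minv_one_minus(1) by auto

lemma sum_zS_bar: "(\<Sum>k<n. zS_bar $ k) = 0"
proof -
  have "(\<Sum>k<n. zS_bar $ k) = theta_star * (\<Sum>k<n. u_vec $ k) + (\<Sum>k<n. v_vec $ k)"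
    unfolding sum_distrib_left sum.distrib[symmetric] by (rule sum.cong) simp_all
  then show ?thesis
    using sum_u_vec_pos by simp
qed

lemma zS_bar_fixed_point:
  assumes k: "k < n"
  shows "zS_bar $ k - (\<Sum>j<n. Lmat c gam nu rho n $$ (k, j) * zS_bar $ j)
    = theta_star * Vvec c gam nu rho sigma n $ k + Uvec c gam nu rho sigma n $ k"
proof -
  have "u_vec $ k - (\<Sum>j<n. Lmat c gam nu rho n $$ (k, j) * u_vec $ j) = Vvec c gam nu rho sigma n $ k"
    "v_vec $ k - (\<Sum>j<n. Lmat c gam nu rho n $$ (k, j) * v_vec $ j) = Uvec c gam nu rho sigma n $ k"
    using L.one_minus_mult_minv[OF Vvec_carrier k] L.one_minus_mult_minv[OF Uvec_carrier k] by blast+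
  moreover have "(\<Sum>j<n. Lmat c gam nu rho n $$ (k, j) * zS_bar $ j)
      = theta_star * (\<Sum>j<n. Lmat c gam nu rho n $$ (k, j) * u_vec $ j)
        + (\<Sum>j<n. Lmat c gam nu rho n $$ (k, j) * v_vec $ j)"
    unfolding sum_distrib_left sum.distrib[symmetric]
    by (rule sum.cong) (simp_all add: algebra_simps)
  moreover have "zS_bar $ k = theta_star * u_vec $ k + v_vec $ k"
    using k by simp
  ultimately show ?thesis
    by (simp only: algebra_simps)
qed

lemma feasible_bar: "feasible n zQ_bar zS_bar"
  unfolding feasible_def
proof (intro conjI allI impI)
  show "zQ_bar \<in> carrier_mat n n"
    by (rule mat_carrier)
  show "zS_bar \<in> carrier_vec n"
    using L.minv_one_minus(1) Vvec_carrier Uvec_carrier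
    by (intro add_carrier_vec smult_carrier_vec[THEN iffD2] mult_mat_vec_carrier)
  show "(\<Sum>k<n. zS_bar $ k) = 0"
    by (rule sum_zS_bar)
  fix j assume j: "j < n"
  have "(\<Sum>i<n. zQ_bar $$ (i, j)) = (\<Sum>i<n. zQ_of (\<lambda>k. zS_bar $ k) i j)"
    using j by (intro sum.cong) auto
  also have "\<dots> = 1"
    by (rule zQ_of_col_sum[OF sum_zS_bar j])
  finally show "(\<Sum>i<n. zQ_bar $$ (i, j)) = 1" .
qed

lemma gobj_less_at_bar:
  assumes "feasible n zQ' zS'" "(zQ', zS') \<noteq> (zQ_bar, zS_bar)"
  shows "gobj c gam nu rho sigma n zQ' zS' < gobj c gam nu rho sigma n zQ_bar zS_bar"
proof (rule stationary_unique_max[OF feasible_bar _ _ assms])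
  let ?z = "\<lambda>k. zS_bar $ k"
  have entries: "zQ_bar $$ (i, j) = zQ_of ?z i j" if "i < n" "j < n" for i j
    using that by simp
  show "grad_Q (\<lambda>i j. zQ_bar $$ (i, j)) ?z i j = n * mu_of ?z j + (if i = j then 1 / c i else 0)"
    if "i < n" "j < n" for i j
    by (rule trans[OF grad_cong(1)[OF entries refl that] grad_Q_zQ_of[OF that]])
  show "grad_S (\<lambda>i j. zQ_bar $$ (i, j)) ?z i = n * theta_star" if "i < n" for i
    by (rule trans[OF grad_cong(2)[OF entries refl that] grad_S_zQ_of[OF that zS_bar_fixed_point[OF that]]])
qed

end

theorem mainTheorem8:
  fixes n :: nat and sigma :: real and c gam nu rho :: "nat \<Rightarrow> real"
  assumes n_pos: "n \<ge> 1" and sigma_pos: "sigma > 0"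
    and c_pos: "\<forall>i<n. c i > 0" and gam_pos: "\<forall>i<n. gam i > 0"
    and nu_pos: "\<forall>i<n. nu i > 0" and rho_bd: "\<forall>i<n. -1 < rho i \<and> rho i < 1"
  shows
    "let L = Lmat c gam nu rho n;
         ph = phi_vec c gam nu rho n;
         W = minv n (1\<^sub>m n - L);
         u = W *\<^sub>v Vvec c gam nu rho sigma n;
         v = W *\<^sub>v Uvec c gam nu rho sigma n;
         thstar = - (\<Sum>k<n. v $ k) / (\<Sum>k<n. u $ k);
         zS = thstar \<cdot>\<^sub>v u + v;
         mu = (\<lambda>j. 1 / (real n * Theta c gam nu n j) *
                 (1 - zeta c gam nu j - sigma / sqrt (real n) * aa c gam nu rho j * zS $ j));
         zQ = mat n n (\<lambda>(i, j). pp c gam nu i j *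
                 (real n * mu j + (if i = j then 1 / c i else 0)
                  - gam i * sigma / sqrt (real n) * zS $ i * rho j * nu j))
     in (\<forall>k<n. \<forall>j<n. L $$ (k, j) \<ge> 0)
      \<and> (\<forall>k<n. (transpose_mat L *\<^sub>v ph) $ k < ph $ k)
      \<and> spectral_radius (map_mat complex_of_real L) < 1
      \<and> nonsingular_M_matrix n (1\<^sub>m n - L)
      \<and> invertible_mat (1\<^sub>m n - L)
      \<and> (\<forall>k<n. \<forall>j<n. W $$ (k, j) \<ge> 0)
      \<and> (\<Sum>k<n. u $ k) \<noteq> 0
      \<and> feasible n zQ zS
      \<and> (\<forall>zQ' zS'. feasible n zQ' zS' \<and> (zQ', zS') \<noteq> (zQ, zS) \<longrightarrow>
            gobj c gam nu rho sigma n zQ' zS' < gobj c gam nu rho sigma n zQ zS)"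
proof -
  interpret mfg n sigma c gam nu rho
    using assms by unfold_locales
  have "n > 0"
    using n_pos by simp
  show ?thesis
    unfolding Let_def mu_of_def[symmetric] zQ_of_def[symmetric]
    using L.L_nonneg L.transpose_f_less L.spectral_radius_less_1[OF \<open>n > 0\<close>]
      L.nonsingular_M_matrix_one_minus[OF \<open>n > 0\<close>] L.invertible_one_minus
      L.minv_one_minus_nonneg sum_u_vec_pos[THEN less_imp_neq, THEN not_sym] feasible_bar gobj_less_at_bar
    by (intro conjI) blast+
qed

end
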